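(* For every prime power $q$ and every $0<\varepsilon<1/2$ there exists a constant $c=c(q,\varepsilon)$ such that for every composite integer $n>c$, $$C_q(n)\le \frac{q^n}{n^{1/2-\varepsilon}}.$$
   Context: $\mathbb{F}_q$ is the finite field with $q$ elements. A finite ring $S$ is a Carmichael ring if $S$ is not a field and $a^{|S|}=a$ for every $a\in S$. A polynomial $f\in\mathbb{F}_q[t]$ is a Carmichael polynomial if $\mathbb{F}_q[t]/(f)$ is a Carmichael ring. $C_q(n)$ denotes the number of monic Carmichael polynomials in $\mathbb{F}_q[t]$ of degree $n$. *)

theory Defs
  imports Complex_Main "HOL-Computational_Algebra.Polynomial"
begin

text \<open>The quotient ring S = F[t]/(f) is modelled via congruence modulo f on polynomials.\<close>

definition quot_card :: "'a::field poly \<Rightarrow> nat" where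
  "quot_card f = card ((UNIV :: 'a poly set) // {(a, b). f dvd (a - b)})"

definition quot_is_field :: "'a::field poly \<Rightarrow> bool" where
  "quot_is_field f \<longleftrightarrow> \<not> f dvd 1 \<and> (\<forall>a. \<not> f dvd a \<longrightarrow> (\<exists>b. f dvd (a * b - 1)))"

definition carmichael_poly :: "'a::field poly \<Rightarrow> bool" where
  "carmichael_poly f \<longleftrightarrow> \<not> quot_is_field f \<and> (\<forall>a. f dvd (a ^ quot_card f - a))"

text \<open>C_q(n) for the finite field 'a with q = CARD('a) elements.\<close>
definition carmichael_count :: "'a::{finite,field} itself \<Rightarrow> nat \<Rightarrow> nat" where
  "carmichael_count _ n =
     card {f :: 'a poly. lead_coeff f = 1 \<and> degree f = n \<and> carmichael_poly f}"

end

theory Submission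
  imports
    Defs
    "Berlekamp_Zassenhaus.Distinct_Degree_Factorization"
    "HOL-Analysis.Harmonic_Numbers"
    "HOL-Real_Asymp.Real_Asymp"
begin

(* Rankin's trick. Let f be a monic Carmichael polynomial of degree n over F_q and P an
   irreducible factor of f. Then a^(q^n) = a modulo P for every a, and since the unit group of the
   field F_q[t]/(P) is cyclic of order q^deg P - 1, this forces deg P | n; moreover deg P < n,
   as F_q[t]/(f) is not a field. Hence, for 0 <= x < 1, C_q(n) x^n is at most the sum of x^deg g
   over all monic g whose irreducible factors have degree a proper divisor of n, which is bounded by
   the Euler product of (1 - x^deg P)^-1 over these P. There are at most q^d/d monic irreducibles
   of degree d, so the logarithm of that product is at most the sum over d | n, d < n, of
   (q^d/d) (x^d + 5/2 x^(2d)). For x = n^(3/(2n))/q, so that x^n = n^(3/2)/q^n, this sum is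
   at most (1 + o(1)) (9/10) ln n + O(1): the divisors d <= n^(9/10) give a harmonic sum, the at
   most n^(1/10) larger ones are at most n/2 and contribute O(n^(-1/20)), and the x^(2d) terms
   form a convergent geometric series. Thus C_q(n) <= q^n n^(1+eps) / n^(3/2). *)


section \<open>Polynomials over a finite field\<close>

lemma two_le_card_field: "2 \<le> CARD('a::{finite,field})"
proof -
  have "card {0::'a, 1} \<le> CARD('a)"
    by (rule card_mono) auto
  then show ?thesis
    by simp
qed

lemma card_poly_degree_less:
  "card {p :: 'a::{finite,field} poly. p = 0 \<or> degree p < n} = CARD('a) ^ n"
proof (induction n)
  case 0
  have "{p :: 'a poly. p = 0 \<or> degree p < 0} = {0}" by auto
  then show ?case by simp
next
  case (Suc n)
  let ?A = "{p :: 'a poly. p = 0 \<or> degree p < n}"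
  have "{p :: 'a poly. p = 0 \<or> degree p < Suc n} = (\<lambda>(a, p). pCons a p) ` (UNIV \<times> ?A)"
  proof (intro equalityI subsetI)
    fix p :: "'a poly" assume "p \<in> {p. p = 0 \<or> degree p < Suc n}"
    then show "p \<in> (\<lambda>(a, p). pCons a p) ` (UNIV \<times> ?A)"
      by (cases p) (auto split: if_splits)
  qed (auto split: if_splits)
  moreover have "inj_on (\<lambda>(a, p). pCons a p) (UNIV \<times> ?A)"
    by (auto simp: inj_on_def)
  ultimately show ?case
    using Suc by (simp add: card_image card_cartesian_product)
qed

lemma finite_poly_degree_le: "finite {p :: 'a::{finite,field} poly. degree p \<le> n}"
proof -
  have "card {p :: 'a poly. p = 0 \<or> degree p < Suc n} > 0"
    unfolding card_poly_degree_less by simp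
  then have "finite {p :: 'a poly. p = 0 \<or> degree p < Suc n}"
    using card_ge_0_finite by blast
  then show ?thesis
    by (rule finite_subset[rotated]) auto
qed

lemma card_quotient_kernel: "card (UNIV // {(a, b). g a = g b}) = card (range g)"
proof -
  have "{(a, b). g a = g b} `` {x} = g -` {g x}" for x
    by auto
  then have "UNIV // {(a, b). g a = g b} = (\<lambda>y. g -` {y}) ` range g"
    by (simp add: quotient_def UNION_singleton_eq_range image_image)
  moreover have "inj_on (\<lambda>y. g -` {y}) (range g)"
    by (auto simp: inj_on_def)
  ultimately show ?thesis
    by (simp add: card_image)
qed

lemma range_mod_poly:
  fixes f :: "'a::field poly"
  assumes "f \<noteq> 0"
  shows "range (\<lambda>a. a mod f) = {r. r = 0 \<or> degree r < degree f}"
proof (intro equalityI subsetI)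
  fix r :: "'a poly" assume "r \<in> {r. r = 0 \<or> degree r < degree f}"
  then have "r = r mod f"
    by (auto simp: mod_poly_less)
  then show "r \<in> range (\<lambda>a. a mod f)"
    by blast
next
  fix r :: "'a poly" assume "r \<in> range (\<lambda>a. a mod f)"
  then show "r \<in> {r. r = 0 \<or> degree r < degree f}"
    using assms degree_mod_less' by blast
qed

lemma quot_card_eq:
  fixes f :: "'a::{finite,field} poly"
  assumes "f \<noteq> 0"
  shows "quot_card f = CARD('a) ^ degree f"
proof -
  have "{(a, b). f dvd a - b} = {(a, b). a mod f = b mod f}"
    by (simp add: mod_eq_dvd_iff)
  then show ?thesis
    unfolding quot_card_def
    by (simp add: card_quotient_kernel range_mod_poly[OF assms] card_poly_degree_less)
qed

lemma irreducible_mod_inverse: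
  fixes P a :: "'a::{finite,field} poly"
  assumes irr: "irreducible P" and "\<not> P dvd a"
  shows "\<exists>b. P dvd a * b - 1"
proof -
  let ?C = "range (\<lambda>x. x mod P)" and ?m = "\<lambda>y. a * y mod P"
  have "P \<noteq> 0"
    using irr by auto
  then have "finite ?C"
    by (auto simp: range_mod_poly intro: finite_subset[OF _ finite_poly_degree_le[of "degree P"]])
  moreover have "?m ` ?C \<subseteq> ?C"
    by auto
  moreover have "inj_on ?m ?C"
  proof (rule inj_onI)
    fix y z assume "y \<in> ?C" "z \<in> ?C" "?m y = ?m z"
    then have "P dvd a * (y - z)" and "y mod P = y" and "z mod P = z"
      by (auto simp: mod_eq_dvd_iff right_diff_distrib)
    then have "P dvd y - z"
      using irr \<open>\<not> P dvd a\<close> by simp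
    then have "y mod P = z mod P"
      by (simp only: mod_eq_dvd_iff)
    then show "y = z"
      using \<open>y mod P = y\<close> \<open>z mod P = z\<close> by simp
  qed
  ultimately have "?m ` ?C = ?C"
    by (rule endo_inj_surj)
  then obtain y where "a * y mod P = 1 mod P"
    by (metis (no_types, lifting) imageE rangeI)
  then show ?thesis
    by (auto simp: mod_eq_dvd_iff)
qed

lemma quot_is_field_if_irreducible:
  fixes f :: "'a::{finite,field} poly"
  assumes "irreducible f"
  shows "quot_is_field f"
  using assms irreducible_mod_inverse irreducible_not_unit by (auto simp: quot_is_field_def)

section \<open>The residue field of an irreducible polynomial\<close>

definition poly_residue_ring :: "'a::field poly \<Rightarrow> 'a poly ring" where
  "poly_residue_ring P = \<lparr>carrier = {x. degree x < degree P}, monoid.mult = (\<lambda>x y. x * y mod P),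
     one = 1, zero = 0, add = (\<lambda>x y. (x + y) mod P)\<rparr>"

context
  fixes P :: "'a::{finite,field} poly"
  assumes irr: "irreducible P"
begin

private abbreviation (input) R where "R \<equiv> poly_residue_ring P"

private lemma degree_pos: "degree P > 0"
  using irr irreducible_degree_field by blast

private lemma degree_mod_less_degree: "degree (x mod P) < degree P"
proof -
  have "P \<noteq> 0"
    using degree_pos by auto
  then show ?thesis
    using degree_pos degree_mod_less'[of P x] by (cases "x mod P = 0") auto
qed

private lemma dvd_degree_less_imp_zero: "P dvd x \<Longrightarrow> degree x < degree P \<Longrightarrow> x = 0"
  using dvd_imp_degree_le[of P x] by fastforce

lemma field_poly_residue_ring: "field R"
proof -
  have inverse: "\<exists>y. degree y < degree P \<and> x * y mod P = 1"
    if "degree x < degree P" "x \<noteq> 0" for x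
  proof -
    have "\<not> P dvd x"
      using that dvd_degree_less_imp_zero by blast
    then obtain b where "P dvd x * b - 1"
      using irreducible_mod_inverse[OF irr] by blast
    then have "x * (b mod P) mod P = 1"
      using degree_pos by (simp add: mod_eq_dvd_iff[symmetric] mod_poly_less mod_mult_right_eq)
    then show ?thesis
      using degree_mod_less_degree by blast
  qed
  have integral: "x = 0 \<or> y = 0"
    if "P dvd x * y" "degree x < degree P" "degree y < degree P" for x y
    using that irr dvd_degree_less_imp_zero by auto
  have negation: "\<exists>y. degree y < degree P \<and> (x + y) mod P = 0" if "degree x < degree P" for x
    using that by (intro exI[of _ "- x"]) simp
  show ?thesis
    by standard (auto simp: poly_residue_ring_def Units_def algebra_simps degree_pos mod_poly_less
        degree_mod_less_degree mod_add_left_eq mod_add_right_eq mod_mult_left_eq mod_mult_right_eq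
        dest: integral inverse negation)
qed

private lemma finite_carrier: "finite (carrier R)"
  by (rule finite_subset[OF _ finite_poly_degree_le[of "degree P"]]) (auto simp: poly_residue_ring_def)

private lemma order_mult_of: "Coset.order (mult_of R) = CARD('a) ^ degree P - 1"
proof -
  have "carrier R = {x. x = 0 \<or> degree x < degree P}"
    using degree_pos by (auto simp: poly_residue_ring_def)
  then have "card (carrier R) = CARD('a) ^ degree P"
    by (simp add: card_poly_degree_less)
  moreover have "0 \<in> carrier R"
    using degree_pos by (simp add: poly_residue_ring_def)
  ultimately show ?thesis
    using finite_carrier by (simp add: Coset.order_def poly_residue_ring_def card_Diff_singleton)
qed

private lemma pow_mult_of: "x \<in> carrier R \<Longrightarrow> x [^]\<^bsub>mult_of R\<^esub> n = x ^ n mod P"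
proof (induction n)
  case 0
  then show ?case
    using degree_pos by (simp add: poly_residue_ring_def mod_poly_less)
next
  case (Suc n)
  then show ?case
    by (simp add: nat_pow_mult_of poly_residue_ring_def mod_mult_left_eq mod_mult_right_eq mult.commute)
qed

private lemma mod_in_carrier_mult_of: "\<not> P dvd a \<Longrightarrow> a mod P \<in> carrier (mult_of R)"
  by (simp add: poly_residue_ring_def degree_mod_less_degree dvd_eq_mod_eq_0)

private lemma group_mult_of: "group (mult_of R)"
  by (rule field.field_mult_group[OF field_poly_residue_ring])

lemma dvd_power_card_power_minus_self: "P dvd a ^ (CARD('a) ^ degree P) - a"
proof -
  define N where "N = CARD('a) ^ degree P"
  have "N > 0"
    using two_le_card_field[where 'a='a] by (simp add: N_def)
  have "P dvd a ^ N - a"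
  proof (cases "P dvd a")
    case True
    then show ?thesis
      using \<open>N > 0\<close> dvd_power[of N a] by (blast intro: dvd_diff dvd_trans)
  next
    case False
    have "a mod P \<in> carrier R"
      using mod_in_carrier_mult_of[OF False] by (simp add: carrier_mult_of)
    moreover have "(a mod P) [^]\<^bsub>mult_of R\<^esub> (N - 1) = \<one>\<^bsub>mult_of R\<^esub>"
      using group.pow_order_eq_1[OF group_mult_of mod_in_carrier_mult_of[OF False]]
      by (simp only: order_mult_of N_def)
    ultimately have "(a mod P) ^ (N - 1) mod P = 1"
      using pow_mult_of[of "a mod P" "N - 1"] by (simp add: poly_residue_ring_def)
    then have "a ^ (N - 1) mod P = 1 mod P"
      using degree_pos by (simp add: power_mod mod_poly_less)
    then have "a * a ^ (N - 1) mod P = a mod P"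
      by (metis mod_mult_right_eq mult.right_neutral)
    moreover have "a ^ N = a * a ^ (N - 1)"
      using \<open>N > 0\<close> by (simp add: power_eq_if)
    ultimately show ?thesis
      by (simp flip: mod_eq_dvd_iff)
  qed
  then show ?thesis
    by (simp add: N_def)
qed

lemma degree_dvd_if_dvd_power_card_power_minus_self:
  assumes "0 < n" and dvd: "\<And>a. P dvd a ^ (CARD('a) ^ n) - a"
  shows "degree P dvd n"
proof -
  obtain g where g: "g \<in> carrier (mult_of R)"
    and ord_g: "group.ord (mult_of R) g = Coset.order (mult_of R)"
    using field.finite_field_mult_group_has_gen2[OF field_poly_residue_ring finite_carrier] by blast
  have "g \<in> carrier R" and "\<not> P dvd g"
    using g dvd_degree_less_imp_zero by (auto simp: poly_residue_ring_def)
  define N where "N = CARD('a) ^ n"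
  have "N > 0"
    using two_le_card_field[where 'a='a] by (simp add: N_def)
  then have "g ^ N - g = g * (g ^ (N - 1) - 1)"
    by (simp add: power_eq_if right_diff_distrib)
  then have "P dvd g * (g ^ (N - 1) - 1)"
    using dvd[of g] by (simp add: N_def)
  then have "P dvd g ^ (N - 1) - 1"
    using irr \<open>\<not> P dvd g\<close> by simp
  then have "g ^ (N - 1) mod P = 1"
    using degree_pos by (simp add: mod_poly_less flip: mod_eq_dvd_iff)
  then have "g [^]\<^bsub>mult_of R\<^esub> (N - 1) = \<one>\<^bsub>mult_of R\<^esub>"
    using pow_mult_of[OF \<open>g \<in> carrier R\<close>, of "N - 1"] by (simp add: poly_residue_ring_def)
  then have "group.ord (mult_of R) g dvd N - 1"
    using group.pow_eq_id[OF group_mult_of g] by simp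
  then have "CARD('a) ^ degree P - 1 dvd CARD('a) ^ n - 1"
    by (simp add: ord_g order_mult_of N_def)
  then show ?thesis
    using dvd_power_minus_1_conv[of "CARD('a)" "degree P" n] two_le_card_field[where 'a='a]
      degree_pos \<open>0 < n\<close> by simp
qed

end

lemma carmichael_poly_irreducible_factor:
  fixes f P :: "'a::{finite,field} poly"
  assumes "monic f" and carm: "carmichael_poly f" and irr: "irreducible P" and "P dvd f"
  shows "degree P dvd degree f \<and> degree P < degree f"
proof -
  have "f \<noteq> 0"
    using \<open>monic f\<close> by auto
  have "0 < degree P"
    using irr irreducible_degree_field by blast
  moreover have "degree P \<le> degree f"
    using dvd_imp_degree_le[OF \<open>P dvd f\<close> \<open>f \<noteq> 0\<close>] .
  moreover have "P dvd a ^ (CARD('a) ^ degree f) - a" for a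
    using carm \<open>P dvd f\<close> quot_card_eq[OF \<open>f \<noteq> 0\<close>]
    by (auto simp: carmichael_poly_def intro: dvd_trans)
  ultimately have "degree P dvd degree f"
    using degree_dvd_if_dvd_power_card_power_minus_self[OF irr] by simp
  moreover have "degree P \<noteq> degree f"
  proof
    assume "degree P = degree f"
    obtain c where "f = P * c"
      using \<open>P dvd f\<close> by blast
    with \<open>f \<noteq> 0\<close> \<open>degree P = degree f\<close> have "is_unit c"
      by (auto simp: degree_mult_eq is_unit_iff_degree)
    then have "irreducible f"
      using irr \<open>f = P * c\<close> by (simp add: irreducible_mult_unit_left mult.commute[of P])
    then show False
      using carm quot_is_field_if_irreducible by (auto simp: carmichael_poly_def)
  qed
  ultimately show ?thesis
    using \<open>degree P \<le> degree f\<close> by simp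
qed

section \<open>Counting monic irreducible polynomials\<close>

lemma degree_prod_mset: "0 \<notin># M \<Longrightarrow> degree (prod_mset M) = (\<Sum>p\<in>#M. degree (p :: 'a::idom poly))"
  by (induction M) (auto simp: degree_mult_eq)

lemma sum_set_mset_le_sum_mset: "(\<Sum>x\<in>set_mset M. f x) \<le> (\<Sum>x\<in>#M. f x :: nat)"
proof (induction M)
  case (add x M)
  then show ?case
    by (simp add: sum.insert_if)
qed simp

lemma monic_irreducible_dvd_eq:
  fixes P Q :: "'a::field poly"
  assumes "monic P" "irreducible P" "monic Q" "irreducible Q" "P dvd Q"
  shows "P = Q"
  using assms by (metis irreducibleD' irreducible_not_unit poly_dvd_antisym)

definition monic_irreducibles :: "nat \<Rightarrow> 'a::field poly set" where
  "monic_irreducibles d = {P. monic P \<and> irreducible P \<and> degree P = d}"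

lemma finite_monic_irreducibles: "finite (monic_irreducibles d :: 'a::{finite,field} poly set)"
  by (rule finite_subset[OF _ finite_poly_degree_le[of d]]) (auto simp: monic_irreducibles_def)

lemma disjoint_monic_irreducibles: "d \<noteq> e \<Longrightarrow> monic_irreducibles d \<inter> monic_irreducibles e = {}"
  by (auto simp: monic_irreducibles_def)

lemma card_monic_irreducibles_le:
  "d * card (monic_irreducibles d :: 'a::{finite,field} poly set) \<le> CARD('a) ^ d"
proof (cases "d = 0")
  case False
  define F :: "'a poly" where "F = monom 1 (CARD('a) ^ d) - monom 1 1"
  have "CARD('a) ^ d > 1"
    using False two_le_card_field[where 'a='a] by (intro one_less_power) auto
  then have "degree F = CARD('a) ^ d"
    unfolding F_def diff_conv_add_uminus by (subst degree_add_eq_left) (simp_all add: degree_monom_eq)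
  then have "monic F"
    using \<open>CARD('a) ^ d > 1\<close> by (simp add: F_def)
  then obtain fs where F: "F = prod_mset fs" and fs: "set_mset fs \<subseteq> {q. irreducible q \<and> monic q}"
    using exactly_one_monic_factorization by blast
  have "monic_irreducibles d \<subseteq> set_mset fs"
  proof
    fix P :: "'a poly" assume "P \<in> monic_irreducibles d"
    then have P: "monic P" "irreducible P" "degree P = d"
      by (auto simp: monic_irreducibles_def)
    then have "P dvd F"
      using dvd_power_card_power_minus_self[of P "monom 1 1"] by (simp add: F_def monom_power)
    then obtain Q where "Q \<in># fs" "P dvd Q"
      using irreducible_dvd_prod_mset[OF P(2)] F by blast
    then show "P \<in> set_mset fs"
      using P fs monic_irreducible_dvd_eq[of P Q] by auto
  qed
  have "d * card (monic_irreducibles d :: 'a poly set) = (\<Sum>P\<in>monic_irreducibles d. degree (P :: 'a poly))"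
    by (simp add: monic_irreducibles_def)
  also have "\<dots> \<le> (\<Sum>P\<in>set_mset fs. degree P)"
    using \<open>monic_irreducibles d \<subseteq> set_mset fs\<close> by (intro sum_mono2) auto
  also have "\<dots> \<le> (\<Sum>P\<in>#fs. degree P)"
    by (rule sum_set_mset_le_sum_mset)
  also have "\<dots> = CARD('a) ^ d"
  proof -
    have "0 \<notin># fs"
      using fs by auto
    then show ?thesis
      using F \<open>degree F = CARD('a) ^ d\<close> by (simp add: degree_prod_mset)
  qed
  finally show ?thesis .
qed simp

section \<open>Euler products over multisets\<close>

lemma sum_power_le_inverse_one_minus:
  fixes y :: real
  assumes "0 \<le> y" "y < 1"
  shows "(\<Sum>k\<in>K. y ^ k) \<le> 1 / (1 - y)"
proof (cases "finite K")
  case True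
  have "summable (\<lambda>k. y ^ k)"
    using assms by (simp add: summable_geometric)
  then have "(\<Sum>k\<in>K. y ^ k) \<le> (\<Sum>k. y ^ k)"
    using assms True by (intro sum_le_suminf) auto
  also have "\<dots> = 1 / (1 - y)"
    using assms by (simp add: suminf_geometric)
  finally show ?thesis .
qed (use assms in simp)

lemma prod_mset_nonneg:
  "(\<And>a. a \<in># M \<Longrightarrow> 0 \<le> y a) \<Longrightarrow> 0 \<le> (\<Prod>a\<in>#M. y a :: 'b::linordered_semidom)"
  by (induction M) auto

lemma prod_mset_split_count:
  "(\<Prod>b\<in>#M. y b) = y a ^ count M a * (\<Prod>b\<in>#filter_mset (\<lambda>b. b \<noteq> a) M. y b)"
proof -
  have "(\<Prod>b\<in>#M. y b) = (\<Prod>b\<in>#replicate_mset (count M a) a + filter_mset (\<lambda>b. b \<noteq> a) M. y b)"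
    by (metis filter_eq_replicate_mset multiset_partition)
  then show ?thesis
    by simp
qed

lemma prod_mset_power_sum: "(\<Prod>a\<in>#M. x ^ f a) = x ^ (\<Sum>a\<in>#M. f a)"
  by (induction M) (simp_all add: power_add)

lemma sum_prod_mset_le_split_count:
  fixes y :: "'a \<Rightarrow> real"
  assumes "finite Ms" "0 \<le> y a" "\<forall>M\<in>Ms. \<forall>b\<in>#M. 0 \<le> y b"
  shows "(\<Sum>M\<in>Ms. \<Prod>b\<in>#M. y b)
           \<le> (\<Sum>k\<le>Max ((\<lambda>M. count M a) ` Ms). y a ^ k) * (\<Sum>M\<in>(\<lambda>M. filter_mset (\<lambda>b. b \<noteq> a) M) ` Ms. \<Prod>b\<in>#M. y b)"
proof -
  let ?rest = "\<lambda>M. filter_mset (\<lambda>b. b \<noteq> a) M"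
  let ?split = "\<lambda>M. (count M a, ?rest M)"
  let ?h = "\<lambda>(k, M). y a ^ k * (\<Prod>b\<in>#M. y b)"
  define K where "K = Max ((\<lambda>M. count M a) ` Ms)"
  have inj: "inj_on ?split Ms"
    by (rule inj_onI) (metis Pair_inject filter_eq_replicate_mset multiset_partition)
  have sub: "?split ` Ms \<subseteq> {..K} \<times> ?rest ` Ms"
    using assms by (auto simp: K_def)
  have "0 \<le> ?h p" if p: "p \<in> {..K} \<times> ?rest ` Ms" for p
  proof -
    obtain k M where "p = (k, ?rest M)" and "M \<in> Ms"
      using p by blast
    then show ?thesis
      using assms by (auto intro!: mult_nonneg_nonneg prod_mset_nonneg)
  qed
  then have "(\<Sum>p\<in>?split ` Ms. ?h p) \<le> (\<Sum>p\<in>{..K} \<times> ?rest ` Ms. ?h p)"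
    using sub \<open>finite Ms\<close> by (intro sum_mono2) auto
  moreover have "(\<Sum>M\<in>Ms. \<Prod>b\<in>#M. y b) = (\<Sum>p\<in>?split ` Ms. ?h p)"
    by (simp add: sum.reindex[OF inj] prod_mset_split_count[of y _ a, symmetric])
  ultimately show ?thesis
    by (simp add: K_def sum_product sum.cartesian_product)
qed

lemma sum_prod_mset_le_euler_product:
  fixes y :: "'a \<Rightarrow> real"
  assumes "finite A" and "\<forall>a\<in>A. 0 \<le> y a \<and> y a < 1"
    and "finite Ms" and "\<forall>M\<in>Ms. set_mset M \<subseteq> A"
  shows "(\<Sum>M\<in>Ms. \<Prod>a\<in>#M. y a) \<le> (\<Prod>a\<in>A. 1 / (1 - y a))"
  using assms
proof (induction A arbitrary: Ms rule: finite_induct)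
  case empty
  then have "Ms \<subseteq> {{#}}"
    by auto
  then have "(\<Sum>M\<in>Ms. \<Prod>a\<in>#M. y a) \<le> (\<Sum>M\<in>{{#}}. \<Prod>a\<in>#M. y a)"
    by (intro sum_mono2) auto
  then show ?case
    by simp
next
  case (insert a A)
  let ?rest = "\<lambda>M. filter_mset (\<lambda>b. b \<noteq> a) M"
  have "(\<Sum>M\<in>Ms. \<Prod>b\<in>#M. y b)
      \<le> (\<Sum>k\<le>Max ((\<lambda>M. count M a) ` Ms). y a ^ k) * (\<Sum>M\<in>?rest ` Ms. \<Prod>b\<in>#M. y b)"
    using insert.prems by (intro sum_prod_mset_le_split_count) auto
  also have "\<dots> \<le> 1 / (1 - y a) * (\<Prod>b\<in>A. 1 / (1 - y b))"
  proof (rule mult_mono)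
    show "(\<Sum>M\<in>?rest ` Ms. \<Prod>b\<in>#M. y b) \<le> (\<Prod>b\<in>A. 1 / (1 - y b))"
      using insert.prems insert.hyps by (intro insert.IH) auto
  qed (use insert.prems sum_power_le_inverse_one_minus in \<open>fastforce intro!: sum_nonneg prod_mset_nonneg\<close>)+
  finally show ?case
    using insert.hyps by simp
qed

section \<open>Rankin's bound for Carmichael polynomials\<close>

definition proper_divisors :: "nat \<Rightarrow> nat set" where
  "proper_divisors n = {d. d dvd n \<and> d < n}"

lemma finite_proper_divisors: "finite (proper_divisors n)"
  by (simp add: proper_divisors_def)

lemma proper_divisor_pos: "d \<in> proper_divisors n \<Longrightarrow> 0 < d"
  by (auto simp: proper_divisors_def intro: Nat.gr0I)

lemma proper_divisor_le_half: "d \<in> proper_divisors n \<Longrightarrow> 2 * d \<le> n"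
proof -
  assume "d \<in> proper_divisors n"
  then obtain k where "n = d * k" "d < n"
    by (auto simp: proper_divisors_def)
  then have "2 \<le> k"
    by (cases "k = 0 \<or> k = 1") auto
  then show "2 * d \<le> n"
    using \<open>n = d * k\<close> by simp
qed

lemma carmichael_poly_factors_proper_degree:
  fixes f :: "'a::{finite,field} poly"
  assumes "monic f" "carmichael_poly f" "f = prod_mset fs" "set_mset fs \<subseteq> {q. irreducible q \<and> monic q}"
  shows "set_mset fs \<subseteq> (\<Union>d\<in>proper_divisors (degree f). monic_irreducibles d)"
proof
  fix P assume "P \<in># fs"
  then have "irreducible P" "monic P" "P dvd f"
    using assms(3,4) by (auto simp: dvd_prod_mset)
  then show "P \<in> (\<Union>d\<in>proper_divisors (degree f). monic_irreducibles d)"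
    using carmichael_poly_irreducible_factor[of f P] assms(1,2)
    by (auto simp: proper_divisors_def monic_irreducibles_def)
qed

lemma carmichael_count_mult_power_le:
  fixes x :: real
  assumes "0 \<le> x" "x < 1"
  shows "real (carmichael_count TYPE('a::{finite,field}) n) * x ^ n
           \<le> (\<Prod>P\<in>(\<Union>d\<in>proper_divisors n. monic_irreducibles d). 1 / (1 - x ^ degree (P :: 'a poly)))"
proof -
  define A :: "'a poly set" where "A = (\<Union>d\<in>proper_divisors n. monic_irreducibles d)"
  define S :: "'a poly set" where "S = {f. lead_coeff f = 1 \<and> degree f = n \<and> carmichael_poly f}"
  define Ms where "Ms = {M. set_mset M \<subseteq> A \<and> prod_mset M \<in> S}"
  have A: "A \<subseteq> {P. irreducible P \<and> monic P}"
    by (auto simp: A_def monic_irreducibles_def)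
  have "finite A"
    by (simp add: A_def finite_proper_divisors finite_monic_irreducibles)
  have "inj_on prod_mset Ms"
    using A by (intro inj_onI) (auto simp: Ms_def intro: monic_factorization_unique_mset)
  moreover have "prod_mset ` Ms = S"
  proof (intro equalityI subsetI)
    fix f assume "f \<in> S"
    then have f: "monic f" "degree f = n" "carmichael_poly f"
      by (auto simp: S_def)
    obtain fs where fs: "f = prod_mset fs" "set_mset fs \<subseteq> {q. irreducible q \<and> monic q}"
      using exactly_one_monic_factorization[OF \<open>monic f\<close>] by blast
    then have "set_mset fs \<subseteq> A"
      using carmichael_poly_factors_proper_degree[OF f(1,3) fs] f(2) by (simp add: A_def)
    then show "f \<in> prod_mset ` Ms"
      using \<open>f \<in> S\<close> fs by (auto simp: Ms_def)
  qed (auto simp: Ms_def)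
  moreover have "finite S"
    by (rule finite_subset[OF _ finite_poly_degree_le[of n]]) (auto simp: S_def)
  ultimately have "finite Ms" "card Ms = card S"
    using finite_imageD card_image by fastforce+
  have "(\<Prod>P\<in>#M. x ^ degree P) = x ^ n" if "M \<in> Ms" for M
  proof -
    have "0 \<notin># M" "degree (prod_mset M) = n"
      using that A by (auto simp: Ms_def S_def)
    then show ?thesis
      by (simp add: prod_mset_power_sum degree_prod_mset)
  qed
  then have "real (carmichael_count TYPE('a) n) * x ^ n = (\<Sum>M\<in>Ms. \<Prod>P\<in>#M. x ^ degree P)"
    using \<open>card Ms = card S\<close> by (simp add: carmichael_count_def S_def)
  also have "\<dots> \<le> (\<Prod>P\<in>A. 1 / (1 - x ^ degree P))"
    using \<open>finite A\<close> \<open>finite Ms\<close> assms A irreducible_degree_field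
    by (intro sum_prod_mset_le_euler_product) (auto simp: Ms_def power_le_one power_less_one_iff)
  finally show ?thesis
    by (simp add: A_def)
qed

lemma sum_irreducibles_of_proper_degree_le:
  fixes g :: "nat \<Rightarrow> real"
  assumes "\<And>d. 0 \<le> g d"
  shows "(\<Sum>P\<in>(\<Union>d\<in>proper_divisors n. monic_irreducibles d). g (degree (P :: 'a::{finite,field} poly)))
           \<le> (\<Sum>d\<in>proper_divisors n. real CARD('a) ^ d / d * g d)"
proof -
  have "(\<Sum>P\<in>(\<Union>d\<in>proper_divisors n. monic_irreducibles d). g (degree (P :: 'a poly)))
      = (\<Sum>d\<in>proper_divisors n. \<Sum>P\<in>monic_irreducibles d. g (degree (P :: 'a poly)))"
    by (rule sum.UNION_disjoint)
      (simp_all add: finite_proper_divisors finite_monic_irreducibles disjoint_monic_irreducibles)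
  also have "\<dots> = (\<Sum>d\<in>proper_divisors n. card (monic_irreducibles d :: 'a poly set) * g d)"
  proof (rule sum.cong[OF refl])
    fix d
    have "(\<Sum>P\<in>monic_irreducibles d. g (degree (P :: 'a poly))) = (\<Sum>P\<in>(monic_irreducibles d :: 'a poly set). g d)"
      by (rule sum.cong) (auto simp: monic_irreducibles_def)
    then show "(\<Sum>P\<in>monic_irreducibles d. g (degree (P :: 'a poly))) = card (monic_irreducibles d :: 'a poly set) * g d"
      by simp
  qed
  also have "\<dots> \<le> (\<Sum>d\<in>proper_divisors n. real CARD('a) ^ d / d * g d)"
  proof (rule sum_mono)
    fix d assume "d \<in> proper_divisors n"
    then have "real d * card (monic_irreducibles d :: 'a poly set) \<le> real CARD('a) ^ d" "0 < d"
      using card_monic_irreducibles_le[of d, where 'a='a] proper_divisor_pos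
      by (simp_all add: of_nat_mult[symmetric] del: of_nat_mult)
    with assms[of d] show "card (monic_irreducibles d :: 'a poly set) * g d \<le> real CARD('a) ^ d / d * g d"
      by (intro mult_right_mono) (simp_all add: field_simps)
  qed
  finally show ?thesis .
qed

lemma inverse_one_minus_le_exp:
  fixes y :: real
  assumes "0 \<le> y" "y \<le> 3/5"
  shows "1 / (1 - y) \<le> exp (y + 5/2 * y\<^sup>2)"
proof -
  have "ln (1 / (1 - y)) \<le> 1 / (1 - y) - 1"
    using assms by (intro ln_le_minus_one) auto
  also have "\<dots> = y + y\<^sup>2 / (1 - y)"
    using assms by (simp add: field_simps power2_eq_square)
  also have "\<dots> \<le> y + y\<^sup>2 / (2/5)"
    using assms by (intro add_left_mono divide_left_mono) auto
  also have "\<dots> = y + 5/2 * y\<^sup>2"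
    by simp
  finally have "exp (ln (1 / (1 - y))) \<le> exp (y + 5/2 * y\<^sup>2)"
    by simp
  then show ?thesis
    using assms by simp
qed

(* The logarithm of the Euler product in carmichael_count_mult_power_le, estimated with
   -ln (1 - y) <= y + 5/2 y^2 and with at most q^d/d monic irreducibles of degree d. *)
definition rankin_sum :: "nat \<Rightarrow> real \<Rightarrow> real \<Rightarrow> real" where
  "rankin_sum n q x = (\<Sum>d\<in>proper_divisors n. q ^ d / d * (x ^ d + 5/2 * x ^ (2 * d)))"

lemma carmichael_count_mult_power_le_exp:
  fixes x :: real
  assumes "0 \<le> x" "x \<le> 3/5"
  shows "real (carmichael_count TYPE('a::{finite,field}) n) * x ^ n \<le> exp (rankin_sum n CARD('a) x)"
proof -
  define A :: "'a poly set" where "A = (\<Union>d\<in>proper_divisors n. monic_irreducibles d)"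
  define g where "g d = x ^ d + 5/2 * x ^ (2 * d)" for d
  have "finite A"
    by (simp add: A_def finite_proper_divisors finite_monic_irreducibles)
  have bound: "0 \<le> x ^ degree P \<and> x ^ degree P \<le> 3/5" if "P \<in> A" for P
  proof -
    have "0 < degree P"
      using that irreducible_degree_field by (auto simp: A_def monic_irreducibles_def)
    then have "x ^ degree P \<le> x"
      using assms by (intro power_decreasing[of 1, simplified]) auto
    then show ?thesis
      using assms by simp
  qed
  have "real (carmichael_count TYPE('a) n) * x ^ n \<le> (\<Prod>P\<in>A. 1 / (1 - x ^ degree P))"
    unfolding A_def using assms by (intro carmichael_count_mult_power_le) auto
  also have "\<dots> \<le> (\<Prod>P\<in>A. exp (g (degree P)))"
  proof (rule prod_mono)
    fix P assume "P \<in> A"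
    then have "1 / (1 - x ^ degree P) \<le> exp (x ^ degree P + 5/2 * (x ^ degree P)\<^sup>2)"
      using bound by (intro inverse_one_minus_le_exp) auto
    then show "0 \<le> 1 / (1 - x ^ degree P) \<and> 1 / (1 - x ^ degree P) \<le> exp (g (degree P))"
      using bound[OF \<open>P \<in> A\<close>] by (simp add: g_def power_even_eq)
  qed
  also have "\<dots> = exp (\<Sum>P\<in>A. g (degree P))"
    using \<open>finite A\<close> by (simp add: exp_sum)
  also have "\<dots> \<le> exp (rankin_sum n CARD('a) x)"
  proof -
    have "(\<Sum>P\<in>A. g (degree P)) \<le> rankin_sum n CARD('a) x"
      unfolding A_def rankin_sum_def g_def[symmetric]
      by (rule sum_irreducibles_of_proper_degree_le) (use assms in \<open>simp add: g_def\<close>)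
    then show ?thesis
      by simp
  qed
  finally show ?thesis .
qed

section \<open>Estimating the divisor sum\<close>

lemma sum_inverse_le_ln_plus_one:
  fixes T :: real
  assumes "1 \<le> T" and "\<forall>d\<in>D. 1 \<le> d \<and> real d \<le> T"
  shows "(\<Sum>d\<in>D. 1 / real d) \<le> ln T + 1"
proof -
  define K where "K = nat \<lfloor>T\<rfloor>"
  have "1 \<le> K" "real K \<le> T"
    unfolding K_def using assms(1) by linarith+
  have "D \<subseteq> {1..K}"
    using assms(2) by (auto simp: K_def le_nat_floor)
  then have "(\<Sum>d\<in>D. 1 / real d) \<le> (\<Sum>d\<in>{1..K}. 1 / real d)"
    by (intro sum_mono2) auto
  also have "\<dots> = harm K"
    by (simp add: harm_def inverse_eq_divide)
  also have "\<dots> \<le> ln (real K) + 1"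
    using euler_mascheroni_sequence_decreasing[of 1 K] \<open>1 \<le> K\<close> by (simp add: harm_def)
  also have "\<dots> \<le> ln T + 1"
    using \<open>1 \<le> K\<close> \<open>real K \<le> T\<close> by simp
  finally show ?thesis .
qed

lemma card_large_proper_divisors_le:
  fixes T :: real
  assumes "0 < T"
  shows "real (card {d\<in>proper_divisors n. T < d}) \<le> n / T"
proof -
  let ?D = "{d\<in>proper_divisors n. T < d}"
  define K where "K = nat \<lfloor>n / T\<rfloor>"
  have complement: "d * (n div d) = n \<and> 0 < n div d" if "d \<in> proper_divisors n" for d
    using that by (auto simp: proper_divisors_def elim!: dvdE)
  have "inj_on (\<lambda>d. n div d) ?D"
  proof (rule inj_onI)
    fix d1 d2 assume "d1 \<in> ?D" "d2 \<in> ?D" "n div d1 = n div d2"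
    then show "d1 = d2"
      using complement[of d1] complement[of d2] by (metis mem_Collect_eq mult_right_cancel neq0_conv)
  qed
  moreover have "(\<lambda>d. n div d) ` ?D \<subseteq> {1..K}"
  proof
    fix e assume "e \<in> (\<lambda>d. n div d) ` ?D"
    then obtain d where d: "d \<in> proper_divisors n" "T < d" "e = n div d"
      by blast
    then have "real d * real e = n" "1 \<le> e"
      using complement[of d] by (auto simp flip: of_nat_mult)
    moreover have "T * e \<le> n"
      using d(2) \<open>real d * real e = n\<close> by (metis mult_right_mono of_nat_0_le_iff less_imp_le)
    ultimately show "e \<in> {1..K}"
      using assms by (auto simp: K_def le_nat_floor field_simps)
  qed
  ultimately have "card ?D \<le> K"
    using card_inj_on_le[of _ ?D "{1..K}"] by simp
  moreover have "real K \<le> n / T"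
    using assms by (simp add: K_def of_nat_floor)
  ultimately show ?thesis
    by linarith
qed

lemma sum_proper_divisors_power_le:
  fixes r T :: real
  assumes "1 \<le> r" "1 \<le> T"
  shows "(\<Sum>d\<in>proper_divisors n. r ^ d / d) \<le> r powr T * (ln T + 1) + n / T * r powr (n / 2) / T"
proof -
  let ?small = "{d\<in>proper_divisors n. real d \<le> T}" and ?large = "{d\<in>proper_divisors n. T < real d}"
  have d_pos: "1 \<le> real d" if "d \<in> proper_divisors n" for d
    using proper_divisor_pos[OF that] by simp
  have "(\<Sum>d\<in>?small. r ^ d / d) \<le> (\<Sum>d\<in>?small. r powr T * (1 / d))"
  proof (rule sum_mono)
    fix d assume "d \<in> ?small"
    then have "r ^ d \<le> r powr T"
      using assms d_pos by (auto simp: powr_realpow[symmetric] intro: powr_mono)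
    then show "r ^ d / d \<le> r powr T * (1 / d)"
      by (simp add: divide_right_mono)
  qed
  also have "\<dots> = r powr T * (\<Sum>d\<in>?small. 1 / d)"
    by (simp add: sum_distrib_left)
  also have "\<dots> \<le> r powr T * (ln T + 1)"
    using assms d_pos by (intro mult_left_mono sum_inverse_le_ln_plus_one) auto
  finally have small: "(\<Sum>d\<in>?small. r ^ d / d) \<le> r powr T * (ln T + 1)" .
  have "(\<Sum>d\<in>?large. r ^ d / d) \<le> (\<Sum>d\<in>?large. r powr (n / 2) / T)"
  proof (rule sum_mono)
    fix d assume d: "d \<in> ?large"
    then have "r ^ d \<le> r powr (n / 2)"
      using assms d_pos proper_divisor_le_half[of d n]
      by (auto simp: powr_realpow[symmetric] intro: powr_mono)
    then show "r ^ d / d \<le> r powr (n / 2) / T"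
      using d assms by (intro frac_le) auto
  qed
  also have "\<dots> = real (card ?large) * (r powr (n / 2) / T)"
    by simp
  also have "\<dots> \<le> n / T * (r powr (n / 2) / T)"
    using card_large_proper_divisors_le[of T n] assms by (intro mult_right_mono) auto
  finally have large: "(\<Sum>d\<in>?large. r ^ d / d) \<le> n / T * r powr (n / 2) / T"
    by simp
  have "(\<Sum>d\<in>proper_divisors n. r ^ d / d) = (\<Sum>d\<in>?small \<union> ?large. r ^ d / d)"
    by (rule sum.cong) auto
  also have "\<dots> = (\<Sum>d\<in>?small. r ^ d / d) + (\<Sum>d\<in>?large. r ^ d / d)"
    by (rule sum.union_disjoint) (auto simp: finite_proper_divisors)
  finally show ?thesis
    using small large by linarith
qed

lemma sum_proper_divisors_geometric_le:
  fixes z :: real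
  assumes "0 \<le> z" "z < 1"
  shows "(\<Sum>d\<in>proper_divisors n. z ^ d / d) \<le> 1 / (1 - z)"
proof -
  have "(\<Sum>d\<in>proper_divisors n. z ^ d / d) \<le> (\<Sum>d\<in>proper_divisors n. z ^ d)"
  proof (rule sum_mono)
    fix d assume "d \<in> proper_divisors n"
    then have "z ^ d / d \<le> z ^ d / 1"
      using assms proper_divisor_pos[of d n] by (intro divide_left_mono) auto
    then show "z ^ d / d \<le> z ^ d"
      by simp
  qed
  also have "\<dots> \<le> 1 / (1 - z)"
    using assms by (rule sum_power_le_inverse_one_minus)
  finally show ?thesis .
qed

lemma rankin_sum_le:
  fixes q r T :: real
  assumes "2 \<le> q" "1 \<le> r" "r \<le> 6/5" "1 \<le> T"
  shows "rankin_sum n q (r / q) \<le> r powr T * (ln T + 1) + n / T * r powr (n / 2) / T + 9"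
proof -
  have "q ^ d / d * ((r / q) ^ d + 5/2 * (r / q) ^ (2 * d)) = r ^ d / d + 5/2 * ((r\<^sup>2 / q) ^ d / d)" for d
  proof -
    have "q ^ d * (r / q) ^ d = r ^ d"
      using assms by (simp add: power_divide)
    moreover have "q ^ d * (r / q) ^ (2 * d) = (q * (r / q)\<^sup>2) ^ d"
      by (simp add: power_mult power_mult_distrib)
    moreover have "q * (r / q)\<^sup>2 = r\<^sup>2 / q"
      by (simp add: power2_eq_square)
    ultimately show ?thesis
      by (simp add: algebra_simps)
  qed
  then have split: "rankin_sum n q (r / q) = (\<Sum>d\<in>proper_divisors n. r ^ d / d)
      + 5/2 * (\<Sum>d\<in>proper_divisors n. (r\<^sup>2 / q) ^ d / d)"
    by (simp add: rankin_sum_def sum.distrib sum_distrib_left)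
  have "r\<^sup>2 \<le> (6/5)\<^sup>2"
    using assms by (intro power_mono) auto
  then have z: "0 \<le> r\<^sup>2 / q" "r\<^sup>2 / q \<le> 18/25"
    using assms by (simp_all add: field_simps)
  have "(\<Sum>d\<in>proper_divisors n. (r\<^sup>2 / q) ^ d / d) \<le> 1 / (1 - r\<^sup>2 / q)"
    by (rule sum_proper_divisors_geometric_le) (use z in linarith)+
  also have "\<dots> \<le> 1 / (1 - 18/25)"
    by (rule frac_le) (use z in linarith)+
  finally show ?thesis
    using split sum_proper_divisors_power_le[OF assms(2,4), of n] by simp
qed

lemma rankin_sum_le_log:
  fixes \<epsilon> q r T :: real
  assumes "0 < \<epsilon>" "2 \<le> q" "1 \<le> r" "r \<le> 6/5" "1 \<le> T" "ln T = 9/10 * ln n" "110 \<le> ln n"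
    and "r powr T \<le> 1 + \<epsilon> / 2" "n / T * r powr (n / 2) / T \<le> 1"
  shows "rankin_sum n q (r / q) \<le> (1 + \<epsilon>) * ln n"
proof -
  have "rankin_sum n q (r / q) \<le> r powr T * (ln T + 1) + n / T * r powr (n / 2) / T + 9"
    using assms by (intro rankin_sum_le) auto
  also have "\<dots> \<le> (1 + \<epsilon> / 2) * (9/10 * ln n + 1) + 1 + 9"
  proof -
    have "r powr T * (ln T + 1) \<le> (1 + \<epsilon> / 2) * (9/10 * ln n + 1)"
      using assms by (intro mult_mono) auto
    then show ?thesis
      using assms by linarith
  qed
  also have "\<dots> \<le> (1 + \<epsilon>) * ln n"
  proof -
    have "\<epsilon> \<le> \<epsilon> * ln n"
      using assms mult_left_mono[of 1 "ln n" \<epsilon>] by simp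
    then have "9/10 * ln n + 9/20 * (\<epsilon> * ln n) + \<epsilon> / 2 + 11 \<le> ln n + \<epsilon> * ln n"
      using assms by linarith
    moreover have "(1 + \<epsilon> / 2) * (9/10 * ln n + 1) + 1 + 9 = 9/10 * ln n + 9/20 * (\<epsilon> * ln n) + \<epsilon> / 2 + 11"
      and "(1 + \<epsilon>) * ln n = ln n + \<epsilon> * ln n"
      by (simp_all add: algebra_simps)
    ultimately show ?thesis
      by (simp only:)
  qed
  finally show ?thesis .
qed

lemma eventually_rankin_sum_le_log:
  fixes \<epsilon> :: real
  assumes "0 < \<epsilon>"
  shows "\<forall>\<^sub>F n in sequentially. \<forall>q\<ge>2. rankin_sum n q (real n powr (3 / (2 * n)) / q) \<le> (1 + \<epsilon>) * ln n"
proof -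
  define r :: "nat \<Rightarrow> real" where "r n = real n powr (3 / (2 * n))" for n
  define T :: "nat \<Rightarrow> real" where "T n = real n powr (9/10)" for n
  have "(\<lambda>n. r n powr T n) \<longlonglongrightarrow> 1"
    unfolding r_def T_def by real_asymp
  then have "\<forall>\<^sub>F n in sequentially. r n powr T n < 1 + \<epsilon> / 2"
    using assms by (intro order_tendstoD) auto
  moreover have "\<forall>\<^sub>F n in sequentially. 1 \<le> r n \<and> r n \<le> 6/5 \<and> 1 \<le> T n"
    unfolding r_def T_def by (intro eventually_conj; real_asymp)
  moreover have "\<forall>\<^sub>F n in sequentially. n / T n * r n powr (n / 2) / T n \<le> 1 \<and> 110 \<le> ln (real n)"
    unfolding r_def T_def by (intro eventually_conj; real_asymp)
  ultimately show ?thesis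
  proof eventually_elim
    case (elim n)
    then have "0 < n"
      by (auto intro: Nat.gr0I)
    then have "ln (T n) = 9/10 * ln n"
      by (simp add: T_def ln_powr)
    show ?case
    proof (intro allI impI)
      fix q :: real assume "2 \<le> q"
      with elim assms \<open>ln (T n) = 9/10 * ln n\<close> have "rankin_sum n q (r n / q) \<le> (1 + \<epsilon>) * ln n"
        by (intro rankin_sum_le_log[where T = "T n"]) auto
      then show "rankin_sum n q (real n powr (3 / (2 * n)) / q) \<le> (1 + \<epsilon>) * ln n"
        by (simp add: r_def)
    qed
  qed
qed

theorem theorem4p6:
  fixes \<epsilon> :: real
  assumes "0 < \<epsilon>" and "\<epsilon> < 1/2"
  shows "\<exists>c::real. \<forall>n::nat. n > 1 \<and> \<not> prime n \<and> real n > c \<longrightarrow>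
           real (carmichael_count TYPE('a::{finite,field}) n)
             \<le> real (card (UNIV :: 'a set)) ^ n / real n powr (1/2 - \<epsilon>)"
proof -
  (* Rankin's parameter x = n^(3/(2n))/q makes x^n = n^(3/2)/q^n. *)
  let ?q = "real CARD('a)" and ?x = "\<lambda>n::nat. real n powr (3 / (2 * n)) / real CARD('a)"
  have "\<forall>\<^sub>F n in sequentially. 0 < n \<and> real n powr (3 / (2 * n)) \<le> 6/5"
    by (intro eventually_conj; real_asymp)
  then have "\<forall>\<^sub>F n in sequentially. 0 < n \<and> ?x n \<le> 3/5 \<and> rankin_sum n ?q (?x n) \<le> (1 + \<epsilon>) * ln n"
    using eventually_rankin_sum_le_log[OF \<open>0 < \<epsilon>\<close>]
    by eventually_elim (use two_le_card_field[where 'a='a] in \<open>simp add: field_simps\<close>)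
  then obtain N where N: "\<And>n. N \<le> n \<Longrightarrow> 0 < n \<and> ?x n \<le> 3/5 \<and> rankin_sum n ?q (?x n) \<le> (1 + \<epsilon>) * ln n"
    unfolding eventually_sequentially by blast
  show ?thesis
  proof (intro exI[of _ "real N"] allI impI)
    fix n assume "1 < n \<and> \<not> prime n \<and> real N < real n"
    then have n: "0 < n" "?x n \<le> 3/5" "rankin_sum n ?q (?x n) \<le> (1 + \<epsilon>) * ln n"
      using N[of n] by auto
    have "real (carmichael_count TYPE('a) n) * ?x n ^ n \<le> exp (rankin_sum n ?q (?x n))"
      using n by (intro carmichael_count_mult_power_le_exp) auto
    also have "\<dots> \<le> real n powr (1 + \<epsilon>)"
      using n by (simp add: powr_def)
    also have "?x n ^ n = real n powr (3/2) / ?q ^ n"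
      using n by (simp add: power_divide powr_realpow[symmetric] powr_powr)
    finally have "real (carmichael_count TYPE('a) n) * real n powr (1/2 - \<epsilon>) * real n powr (1 + \<epsilon>)
        \<le> ?q ^ n * real n powr (1 + \<epsilon>)"
      using n by (simp add: field_simps flip: powr_add)
    then show "real (carmichael_count TYPE('a) n) \<le> real (card (UNIV :: 'a set)) ^ n / real n powr (1/2 - \<epsilon>)"
      using n by (simp add: pos_le_divide_eq)
  qed
qed

end
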